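(* Let $(X_n)_{n\ge0}$ be the Kendall random walk with step distribution $\nu\in\mathcal P_s$, $\nu(\{0\})=0$, let $a>0$ with $\nu(\{a\})=0$ and $G(a)\ne\frac12$, and let $\tau_a^+=\min\{n\ge1:X_n>a\}$. Then for every $n\in\mathbb N$, $n\ge1$, $$\mathbb P(\tau_a^+=n)=A(a)\Big(\frac12\Big)^n+B(a)\,n\,(1-G(a))^2G(a)^{n-1}+C(a)\,G(a)^{n-1}(1-G(a)),$$ where $$A(a)=1+\frac{H(a)}{(2G(a)-1)^2}-\frac{G(a)}{2G(a)-1},\quad B(a)=\frac{H(a)}{(2G(a)-1)(1-G(a))},\quad C(a)=\frac{G(a)}{2G(a)-1}-\frac{H(a)}{(2G(a)-1)^2}\frac{G(a)}{1-G(a)},$$ and $A(a)+B(a)+C(a)=1$.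
   Context: Fix $\alpha>0$. $\mathcal P_s$ is the set of symmetric Borel probability measures on $\mathbb R$. For $x\in\mathbb R$, $\widetilde\delta_x=\frac12(\delta_x+\delta_{-x})$. For a probability measure $\lambda=\mathcal L(X)$ and $c>0$, $T_c\lambda=\mathcal L(cX)$, and $T_0\lambda=\delta_0$. $\widetilde\pi_{2\alpha}$ is the symmetric Pareto probability measure with density $\alpha|y|^{-2\alpha-1}\mathbf 1_{\{|y|\ge1\}}$. The Kendall convolution $\vartriangle_\alpha$ on $\mathcal P_s$ is defined by $\widetilde\delta_x\vartriangle_\alpha\widetilde\delta_y=T_M\big(\varrho^\alpha\widetilde\pi_{2\alpha}+(1-\varrho^\alpha)\widetilde\delta_1\big)$ where $M=\max(|x|,|y|)$, $m=\min(|x|,|y|)$, $\varrho=m/M$ (and $\varrho=0$ if $M=0$), extended by $(\nu_1\vartriangle_\alpha\nu_2)(A)=\int\int(\widetilde\delta_x\vartriangle_\alpha\widetilde\delta_y)(A)\,\nu_1(dx)\nu_2(dy)$. For $x\in\mathbb R$ and $\mu\in\mathcal P_s$ we write $\delta_x\vartriangle_\alpha\mu:=\widetilde\delta_x\vartriangle_\alpha\mu$. $\Psi(t)=(1-|t|^\alpha)_+$. For the measure $\nu$: $F(t)=\nu((-\infty,t])$, $G(t)=\int_{\mathbb R}\Psi(x/t)\,\nu(dx)$ for $t\neq0$, and for $t>0$, $H(t)=2F(t)-1-G(t)=t^{-\alpha}\int_{[-t,t]}|x|^\alpha\nu(dx)$. The Kendall random walk with step distribution $\nu$ is the Markov chain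 $(X_n)_{n\ge0}$ with $X_0=0$ and transition kernel $\mathbb P(X_{k+1}\in A\mid X_k=x)=(\delta_x\vartriangle_\alpha\nu)(A)$. *)

theory Defs
  imports "HOL-Probability.Probability"
begin

definition Psi :: "real \<Rightarrow> real \<Rightarrow> real" where
  "Psi \<alpha> t = max 0 (1 - \<bar>t\<bar> powr \<alpha>)"

definition sym_measure :: "real measure \<Rightarrow> bool" where
  "sym_measure \<nu> \<longleftrightarrow> prob_space \<nu> \<and> sets \<nu> = sets borel \<and>
     (\<forall>A \<in> sets borel. measure \<nu> (uminus ` A) = measure \<nu> A)"

definition sym_pareto :: "real \<Rightarrow> real measure" where
  "sym_pareto \<alpha> = density lborel
     (\<lambda>y. ennreal (if 1 \<le> \<bar>y\<bar> then \<alpha> * \<bar>y\<bar> powr (-2*\<alpha>-1) else 0))"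

definition tdelta :: "real \<Rightarrow> real set \<Rightarrow> real" where
  "tdelta x A = (indicator A x + indicator A (-x)) / 2"

definition sym_dirac :: "real \<Rightarrow> real measure" where
  "sym_dirac x = measure_of UNIV (sets borel) (\<lambda>A. ennreal (tdelta x A))"

text \<open>(tilde-delta_x Kendall-conv tilde-delta_y)(A)
  = T_M (rho^alpha pi_{2alpha} + (1 - rho^alpha) tilde-delta_1)(A), T_0 lambda = delta_0,
  where T_c lambda (A) = lambda {z. c z \<in> A}.\<close>
definition kendall_pair :: "real \<Rightarrow> real \<Rightarrow> real \<Rightarrow> real set \<Rightarrow> real" where
  "kendall_pair \<alpha> x y A =
     (let M = max \<bar>x\<bar> \<bar>y\<bar>; m = min \<bar>x\<bar> \<bar>y\<bar> in
      if M = 0 then indicator A 0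
      else (let \<rho> = m / M; B = (\<lambda>z. M * z) -` A in
            \<rho> powr \<alpha> * measure (sym_pareto \<alpha>) B + (1 - \<rho> powr \<alpha>) * tdelta 1 B))"

definition kendall_conv :: "real \<Rightarrow> real measure \<Rightarrow> real measure \<Rightarrow> real measure" where
  "kendall_conv \<alpha> \<nu>1 \<nu>2 = measure_of UNIV (sets borel)
     (\<lambda>A. ennreal (LINT x|\<nu>1. LINT y|\<nu>2. kendall_pair \<alpha> x y A))"

definition kendall_kernel :: "real \<Rightarrow> real measure \<Rightarrow> real \<Rightarrow> real measure" where
  "kendall_kernel \<alpha> \<nu> x = kendall_conv \<alpha> (sym_dirac x) \<nu>"

text \<open>passage k x = P_x(X_1 \<le> a, ..., X_k \<le> a, X_{k+1} > a) for the Markov chain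
  with kernel kendall_kernel started at x (joint law of a Markov chain via iterated kernels).\<close>
primrec kendall_passage :: "real \<Rightarrow> real measure \<Rightarrow> real \<Rightarrow> nat \<Rightarrow> real \<Rightarrow> real" where
  "kendall_passage \<alpha> \<nu> a 0 x = measure (kendall_kernel \<alpha> \<nu> x) {a<..}"
| "kendall_passage \<alpha> \<nu> a (Suc k) x =
     (LINT y|kendall_kernel \<alpha> \<nu> x. indicator {..a} y * kendall_passage \<alpha> \<nu> a k y)"

definition first_passage_prob :: "real \<Rightarrow> real measure \<Rightarrow> real \<Rightarrow> nat \<Rightarrow> real" where
  "first_passage_prob \<alpha> \<nu> a n = kendall_passage \<alpha> \<nu> a (n - 1) 0"

definition kG :: "real \<Rightarrow> real measure \<Rightarrow> real \<Rightarrow> real" where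
  "kG \<alpha> \<nu> t = (LINT x|\<nu>. Psi \<alpha> (x / t))"

definition kH :: "real \<Rightarrow> real measure \<Rightarrow> real \<Rightarrow> real" where
  "kH \<alpha> \<nu> t = t powr (-\<alpha>) * (LINT x|\<nu>. indicator {-t..t} x * \<bar>x\<bar> powr \<alpha>)"

end

theory Submission
  imports Defs
begin

text \<open>Seen from the level \<open>a\<close>, one step of the walk depends on its position \<open>x\<close> only through
  \<open>w(x) = (|x|/a)\<^sup>\<alpha>\<close>. If \<open>|x| > a\<close>, the step lands in \<open>(a, \<infinity>)\<close> and in \<open>(-\<infinity>, -a)\<close> with
  probability \<open>1/2\<close> each, so \<open>P\<^sub>x(\<tau>\<^sub>a\<^sup>+ = k + 1) = 2\<^sup>-\<^sup>k\<^sup>-\<^sup>1\<close>. If \<open>|x| \<le> a\<close>, the probability of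
  \<open>(a, \<infinity>)\<close> and the truncated moment \<open>\<integral>\<^bsub>[-a, a]\<^esub> |y|\<^sup>\<alpha>\<close> of the step distribution are affine in
  \<open>w(x)\<close>, with coefficients given by \<open>G(a)\<close> and \<open>H(a)\<close>. Hence \<open>P\<^sub>x(\<tau>\<^sub>a\<^sup>+ = k + 1) = p\<^sub>k + q\<^sub>k w(x)\<close>
  on \<open>[-a, a]\<close>, where \<open>(p\<^sub>k, q\<^sub>k)\<close> obeys a linear recursion whose matrix has the double
  eigenvalue \<open>G(a)\<close>; solving it and taking \<open>x = 0\<close> gives the formula.\<close>

lemma sigma_algebra_borel_real: "sigma_algebra UNIV (sets (borel :: real measure))"
  using sets.sigma_algebra_axioms[of borel] by simp

lemma sets_measure_of_borel[simp]:
  "sets (measure_of UNIV (sets borel) \<mu>) = sets (borel :: real measure)"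
  by (simp add: sets.sigma_sets_eq[of borel, simplified])

lemma space_measure_of_borel[simp]:
  "space (measure_of UNIV (sets borel) \<mu>) = (UNIV :: real set)"
  by (simp add: space_measure_of_conv)

lemma sets_borel_vimage_uminus:
  "A \<in> sets borel \<Longrightarrow> uminus -` A \<in> sets (borel :: real measure)"
  using measurable_sets[of uminus borel borel A] by simp

lemma sets_borel_vimage_mult:
  "A \<in> sets borel \<Longrightarrow> (\<lambda>z. c * z) -` A \<in> sets (borel :: real measure)"
  using measurable_sets[of "\<lambda>z. c * z" borel borel A] by simp

lemma ennreal_mult_add_mult:
  assumes "0 \<le> a" "0 \<le> b" "0 \<le> c" "0 \<le> d"
  shows "ennreal a * ennreal b + ennreal c * ennreal d = ennreal (a * b + c * d)"
  using assms by (simp add: ennreal_mult ennreal_plus)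

lemma sum_minus_twice_product_bounds:
  fixes p q A :: real
  assumes "0 \<le> p" "p \<le> A" "0 \<le> q" "q \<le> A"
  shows "0 \<le> p + q - 2 * (p * q) / A \<and> p + q - 2 * (p * q) / A \<le> 2 * A"
proof -
  have "q / A \<le> 1" "p / A \<le> 1"
    using assms by (auto simp: divide_le_eq_1)
  then have "0 \<le> p * (1 - q / A) + q * (1 - p / A)" "0 \<le> 2 * (p * q) / A"
    using assms by auto
  moreover have "p + q - 2 * (p * q) / A = p * (1 - q / A) + q * (1 - p / A)"
    by (simp add: algebra_simps)
  ultimately show ?thesis
    using assms by linarith
qed

section \<open>The symmetric Dirac measure\<close>

lemma tdelta_nonneg: "0 \<le> tdelta x A"
  by (simp add: tdelta_def)

lemma ennreal_tdelta: "ennreal (tdelta x A) = (indicator A x + indicator A (-x)) / 2"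
  unfolding tdelta_def
  by (simp add: divide_ennreal[symmetric] ennreal_indicator)

lemma tdelta_countably_additive:
  assumes "disjoint_family A"
  shows "(\<Sum>i. ennreal (tdelta x (A i))) = ennreal (tdelta x (\<Union>i. A i))"
proof -
  have "(\<Sum>i. ennreal (tdelta x (A i))) =
      (\<Sum>i. indicator (A i) x * inverse 2 + indicator (A i) (-x) * inverse 2)"
    by (simp add: ennreal_tdelta divide_ennreal_def distrib_right)
  also have "\<dots> = (\<Sum>i. indicator (A i) x) * inverse 2 + (\<Sum>i. indicator (A i) (-x)) * inverse 2"
    by (simp add: suminf_add[symmetric])
  also have "\<dots> = ennreal (tdelta x (\<Union>i. A i))"
    by (simp add: suminf_indicator[OF assms] ennreal_tdelta divide_ennreal_def distrib_right)
  finally show ?thesis .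
qed

lemma emeasure_sym_dirac:
  assumes "A \<in> sets borel"
  shows "emeasure (sym_dirac x) A = ennreal (tdelta x A)"
  unfolding sym_dirac_def
proof (rule emeasure_measure_of_sigma[OF sigma_algebra_borel_real _ _ assms])
  show "positive (sets borel) (\<lambda>A. ennreal (tdelta x A))"
    by (simp add: positive_def tdelta_def)
  show "countably_additive (sets borel) (\<lambda>A. ennreal (tdelta x A))"
    by (auto simp: countably_additive_def tdelta_countably_additive)
qed

lemma sets_sym_dirac[simp]: "sets (sym_dirac x) = sets borel"
  by (simp add: sym_dirac_def)

lemma space_sym_dirac[simp]: "space (sym_dirac x) = UNIV"
  by (simp add: sym_dirac_def)

lemma prob_space_sym_dirac: "prob_space (sym_dirac x)"
  by (rule prob_spaceI) (simp add: emeasure_sym_dirac tdelta_def)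

lemma integral_sym_dirac_even:
  fixes f :: "real \<Rightarrow> real"
  assumes f: "f \<in> borel_measurable borel" and even: "f (-x) = f x"
  shows "(LINT z|sym_dirac x. f z) = f x"
proof -
  interpret prob_space "sym_dirac x" by (rule prob_space_sym_dirac)
  have "UNIV - {x, -x} \<in> null_sets (sym_dirac x)"
    by (auto simp: null_sets_def emeasure_sym_dirac tdelta_def)
  then have "AE z in sym_dirac x. f z = f x"
    by (rule AE_I') (use even in auto)
  moreover have "f \<in> borel_measurable (sym_dirac x)"
    using f measurable_cong_sets[OF sets_sym_dirac refl] by blast
  ultimately have "(LINT z|sym_dirac x. f z) = (LINT z|sym_dirac x. f x)"
    by (intro integral_cong_AE) auto
  then show ?thesis
    using prob_space by simp
qed

section \<open>The symmetric Pareto measure\<close>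

definition pareto_density :: "real \<Rightarrow> real \<Rightarrow> real" where
  "pareto_density \<alpha> y = (if 1 \<le> \<bar>y\<bar> then \<alpha> * \<bar>y\<bar> powr (-2*\<alpha>-1) else 0)"

lemma sym_pareto_eq_density: "sym_pareto \<alpha> = density lborel (\<lambda>y. ennreal (pareto_density \<alpha> y))"
  by (simp add: sym_pareto_def pareto_density_def)

lemma borel_measurable_pareto_density[measurable]: "pareto_density \<alpha> \<in> borel_measurable borel"
  unfolding pareto_density_def by measurable

lemma pareto_density_uminus[simp]: "pareto_density \<alpha> (-y) = pareto_density \<alpha> y"
  by (simp add: pareto_density_def)

lemma sets_sym_pareto[simp]: "sets (sym_pareto \<alpha>) = sets borel"
  by (simp add: sym_pareto_def)

lemma space_sym_pareto[simp]: "space (sym_pareto \<alpha>) = UNIV"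
  by (simp add: sym_pareto_def)

lemma measurable_sym_pareto[simp]: "measurable (sym_pareto \<alpha>) N = measurable borel N"
  by (rule measurable_cong_sets) auto

lemma nn_integral_sym_pareto:
  assumes "f \<in> borel_measurable borel"
  shows "(\<integral>\<^sup>+z. f z \<partial>sym_pareto \<alpha>) = (\<integral>\<^sup>+z. ennreal (pareto_density \<alpha> z) * f z \<partial>lborel)"
  unfolding sym_pareto_eq_density by (intro nn_integral_density) (use assms in auto)

lemma nn_integral_sym_pareto_reflect:
  assumes [measurable]: "f \<in> borel_measurable borel"
  shows "(\<integral>\<^sup>+z. f (-z) \<partial>sym_pareto \<alpha>) = (\<integral>\<^sup>+z. f z \<partial>sym_pareto \<alpha>)"
proof -
  have "(\<integral>\<^sup>+z. f z \<partial>sym_pareto \<alpha>) = (\<integral>\<^sup>+z. ennreal (pareto_density \<alpha> z) * f z \<partial>lborel)"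
    by (rule nn_integral_sym_pareto) simp
  also have "\<dots> = (\<integral>\<^sup>+z. ennreal (pareto_density \<alpha> (-z)) * f (-z) \<partial>lborel)"
    using nn_integral_real_affine[of "\<lambda>z. ennreal (pareto_density \<alpha> z) * f z" "-1" 0] by simp
  also have "\<dots> = (\<integral>\<^sup>+z. f (-z) \<partial>sym_pareto \<alpha>)"
    by (simp add: nn_integral_sym_pareto)
  finally show ?thesis ..
qed

lemma emeasure_sym_pareto_reflect:
  assumes "A \<in> sets borel"
  shows "emeasure (sym_pareto \<alpha>) (uminus -` A) = emeasure (sym_pareto \<alpha>) A"
proof -
  have "uminus -` A \<in> sets borel"
    using assms by (rule sets_borel_vimage_uminus)
  then have "emeasure (sym_pareto \<alpha>) (uminus -` A) = (\<integral>\<^sup>+z. indicator A (-z) \<partial>sym_pareto \<alpha>)"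
    by (simp flip: nn_integral_indicator add: indicator_vimage[symmetric] comp_def)
  also have "\<dots> = emeasure (sym_pareto \<alpha>) A"
    using assms by (simp add: nn_integral_sym_pareto_reflect)
  finally show ?thesis .
qed

lemma emeasure_sym_pareto_Icc: "emeasure (sym_pareto \<alpha>) {-1..1} = 0"
proof -
  have "emeasure (sym_pareto \<alpha>) {-1..1} =
      (\<integral>\<^sup>+z. ennreal (pareto_density \<alpha> z) * indicator {-1..1} z \<partial>lborel)"
    unfolding sym_pareto_eq_density by (rule emeasure_density) auto
  also have "\<dots> = 0"
  proof (rule nn_integral_0_iff_AE[THEN iffD2])
    show "AE z in lborel. ennreal (pareto_density \<alpha> z) * indicator {-1..1} z = 0"
      using AE_lborel_singleton[of 1] AE_lborel_singleton[of "-1"]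
      by eventually_elim (auto simp: pareto_density_def indicator_def)
  qed simp
  finally show ?thesis .
qed

lemma emeasure_sym_pareto_greaterThan:
  assumes "0 < \<alpha>" "1 \<le> t"
  shows "emeasure (sym_pareto \<alpha>) {t<..} = ennreal (t powr (-2*\<alpha>) / 2)"
proof -
  have "emeasure (sym_pareto \<alpha>) {t<..} =
      (\<integral>\<^sup>+z. ennreal (pareto_density \<alpha> z) * indicator {t<..} z \<partial>lborel)"
    unfolding sym_pareto_eq_density by (rule emeasure_density) auto
  also have "\<dots> = (\<integral>\<^sup>+z. ennreal (\<alpha> * z powr (-2*\<alpha>-1)) * indicator {t..} z \<partial>lborel)"
  proof (rule nn_integral_cong_AE)
    show "AE z in lborel. ennreal (pareto_density \<alpha> z) * indicator {t<..} z =
        ennreal (\<alpha> * z powr (-2*\<alpha>-1)) * indicator {t..} z"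
      using AE_lborel_singleton[of t]
      by eventually_elim (use assms in \<open>auto simp: pareto_density_def indicator_def\<close>)
  qed
  also have "\<dots> = ennreal (0 - (- (t powr (-2*\<alpha>)) / 2))"
  proof (rule nn_integral_FTC_atLeast)
    fix x assume "t \<le> x"
    then have "0 < x" using assms by simp
    show "0 \<le> \<alpha> * x powr (-2*\<alpha>-1)" using assms by simp
    show "((\<lambda>z. - (z powr (-2*\<alpha>)) / 2) has_real_derivative \<alpha> * x powr (-2*\<alpha>-1)) (at x)"
      using \<open>0 < x\<close> by (auto intro!: derivative_eq_intros)
  next
    have "((\<lambda>z. z powr (-2*\<alpha>)) \<longlongrightarrow> 0) at_top"
      using assms by (intro tendsto_neg_powr) (auto simp: filterlim_ident)
    from tendsto_divide[OF tendsto_minus[OF this] tendsto_const, of 2]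
    show "((\<lambda>z. - (z powr (-2*\<alpha>)) / 2) \<longlongrightarrow> 0) at_top"
      by simp
  qed simp
  finally show ?thesis by simp
qed

lemma prob_space_sym_pareto:
  assumes "0 < \<alpha>"
  shows "prob_space (sym_pareto \<alpha>)"
proof (rule prob_spaceI)
  have "emeasure (sym_pareto \<alpha>) UNIV = emeasure (sym_pareto \<alpha>) (UNIV - {-1..1})"
    by (rule emeasure_Diff_null_set[symmetric]) (auto simp: null_sets_def emeasure_sym_pareto_Icc)
  also have "UNIV - {-1..1} = {1<..} \<union> {..<-1::real}"
    by auto
  also have "emeasure (sym_pareto \<alpha>) \<dots> =
      emeasure (sym_pareto \<alpha>) {1<..} + emeasure (sym_pareto \<alpha>) {..<-1}"
    by (rule plus_emeasure[symmetric]) auto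
  also have "{..<-1} = uminus -` {(1::real)<..}"
    by auto
  also have "emeasure (sym_pareto \<alpha>) {1<..} + emeasure (sym_pareto \<alpha>) \<dots> = ennreal (1/2) + ennreal (1/2)"
    using emeasure_sym_pareto_greaterThan[OF assms order_refl]
    by (simp add: emeasure_sym_pareto_reflect)
  also have "\<dots> = 1"
    by (subst ennreal_plus[symmetric]) auto
  finally show "emeasure (sym_pareto \<alpha>) (space (sym_pareto \<alpha>)) = 1"
    by simp
qed

lemma measure_sym_pareto_greaterThan:
  assumes "0 < \<alpha>" "0 < b"
  shows "measure (sym_pareto \<alpha>) {b<..} = (if 1 \<le> b then b powr (-2*\<alpha>) / 2 else 1 / 2)"
proof (cases "1 \<le> b")
  case True
  then show ?thesis
    using emeasure_sym_pareto_greaterThan[OF assms(1) True] by (simp add: measure_def)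
next
  case False
  have "emeasure (sym_pareto \<alpha>) {b<..} = emeasure (sym_pareto \<alpha>) ({b<..} - {-1..1})"
    by (rule emeasure_Diff_null_set[symmetric]) (auto simp: null_sets_def emeasure_sym_pareto_Icc)
  also have "{b<..} - {-1..1} = {1<..}"
    using False assms by auto
  finally have "measure (sym_pareto \<alpha>) {b<..} = enn2real (ennreal (1/2))"
    using emeasure_sym_pareto_greaterThan[OF assms(1) order_refl] by (simp only: measure_def) simp
  also have "enn2real (ennreal (1/2)) = 1/2"
    by (rule enn2real_ennreal) simp
  finally show ?thesis
    using False by simp
qed

definition trunc_powr :: "real \<Rightarrow> real \<Rightarrow> real \<Rightarrow> real" where
  "trunc_powr \<alpha> a v = indicator {-a..a} v * \<bar>v\<bar> powr \<alpha>"

lemma borel_measurable_trunc_powr[measurable]: "trunc_powr \<alpha> a \<in> borel_measurable borel"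
  unfolding trunc_powr_def by measurable

lemma trunc_powr_nonneg: "0 \<le> trunc_powr \<alpha> a v"
  by (simp add: trunc_powr_def)

lemma nn_integral_sym_pareto_trunc_powr:
  assumes "0 < \<alpha>" "1 \<le> b"
  shows "(\<integral>\<^sup>+z. ennreal (trunc_powr \<alpha> b z) \<partial>sym_pareto \<alpha>) = ennreal (2 * (1 - b powr (-\<alpha>)))"
proof -
  define h where "h z = ennreal (\<alpha> * z powr (-\<alpha>-1)) * indicator {1..b} z" for z
  have h_meas[measurable]: "h \<in> borel_measurable borel"
    unfolding h_def by measurable
  have "(\<integral>\<^sup>+z. ennreal (trunc_powr \<alpha> b z) \<partial>sym_pareto \<alpha>) =
      (\<integral>\<^sup>+z. ennreal (pareto_density \<alpha> z) * ennreal (indicator {-b..b} z * \<bar>z\<bar> powr \<alpha>) \<partial>lborel)"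
    unfolding trunc_powr_def by (rule nn_integral_sym_pareto) measurable
  also have "\<dots> = (\<integral>\<^sup>+z. h z + h (-z) \<partial>lborel)"
  proof (intro nn_integral_cong)
    fix z :: real
    have "\<alpha> * \<bar>z\<bar> powr (-2*\<alpha>-1) * \<bar>z\<bar> powr \<alpha> = \<alpha> * \<bar>z\<bar> powr (-\<alpha>-1)"
      by (simp add: mult.assoc flip: powr_add)
    then show "ennreal (pareto_density \<alpha> z) * ennreal (indicator {-b..b} z * \<bar>z\<bar> powr \<alpha>) = h z + h (-z)"
      using assms by (cases "0 \<le> z")
        (auto simp: h_def pareto_density_def indicator_def abs_if simp flip: ennreal_mult)
  qed
  also have "\<dots> = (\<integral>\<^sup>+z. h z \<partial>lborel) + (\<integral>\<^sup>+z. h (-z) \<partial>lborel)"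
    by (rule nn_integral_add) auto
  also have "(\<integral>\<^sup>+z. h (-z) \<partial>lborel) = (\<integral>\<^sup>+z. h z \<partial>lborel)"
    using nn_integral_real_affine[OF h_meas, of "-1" 0] by simp
  also have "(\<integral>\<^sup>+z. h z \<partial>lborel) = ennreal ((- (b powr (-\<alpha>))) - (- (1 powr (-\<alpha>))))"
    unfolding h_def
  proof (rule nn_integral_FTC_Icc)
    fix x :: real assume "x \<in> {1..b}"
    then have "0 < x" by simp
    show "0 \<le> \<alpha> * x powr (-\<alpha>-1)" using assms by simp
    show "((\<lambda>z. - (z powr (-\<alpha>))) has_real_derivative \<alpha> * x powr (-\<alpha>-1)) (at x)"
      using \<open>0 < x\<close> by (auto intro!: derivative_eq_intros)
  qed (use assms in auto)
  also have "\<dots> + \<dots> = ennreal (2 * (1 - b powr (-\<alpha>)))"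
    using powr_mono[of "-\<alpha>" 0 b] assms by (simp flip: ennreal_plus)
  finally show ?thesis .
qed

lemma nn_integral_sym_pareto_trunc_powr_lt_1:
  assumes "b < 1"
  shows "(\<integral>\<^sup>+z. ennreal (trunc_powr \<alpha> b z) \<partial>sym_pareto \<alpha>) = 0"
proof -
  have "(\<integral>\<^sup>+z. ennreal (trunc_powr \<alpha> b z) \<partial>sym_pareto \<alpha>) =
      (\<integral>\<^sup>+z. ennreal (pareto_density \<alpha> z) * ennreal (indicator {-b..b} z * \<bar>z\<bar> powr \<alpha>) \<partial>lborel)"
    unfolding trunc_powr_def by (rule nn_integral_sym_pareto) measurable
  also have "\<dots> = (\<integral>\<^sup>+(z::real). 0 \<partial>lborel)"
    by (intro nn_integral_cong) (use assms in \<open>auto simp: pareto_density_def indicator_def\<close>)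
  finally show ?thesis
    by simp
qed

lemma trunc_powr_scale:
  assumes "0 < M"
  shows "trunc_powr \<alpha> a (M * z) = M powr \<alpha> * trunc_powr \<alpha> (a / M) z"
proof -
  have "-a \<le> M * z \<and> M * z \<le> a \<longleftrightarrow> -(a / M) \<le> z \<and> z \<le> a / M"
    using assms by (auto simp: field_simps)
  then show ?thesis
    using assms by (auto simp: trunc_powr_def indicator_def abs_mult powr_mult)
qed

lemma nn_integral_sym_pareto_trunc_powr_scaled:
  assumes "0 < \<alpha>" "0 < a" "0 < M"
  shows "(\<integral>\<^sup>+z. ennreal (trunc_powr \<alpha> a (M * z)) \<partial>sym_pareto \<alpha>) =
    ennreal (if M \<le> a then M powr \<alpha> * (2 * (1 - M powr \<alpha> / a powr \<alpha>)) else 0)"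
proof -
  have "(\<integral>\<^sup>+z. ennreal (trunc_powr \<alpha> a (M * z)) \<partial>sym_pareto \<alpha>) =
      (\<integral>\<^sup>+z. ennreal (M powr \<alpha>) * ennreal (trunc_powr \<alpha> (a / M) z) \<partial>sym_pareto \<alpha>)"
    using assms(3) by (intro nn_integral_cong) (simp add: trunc_powr_scale ennreal_mult trunc_powr_nonneg)
  also have "\<dots> = ennreal (M powr \<alpha>) * (\<integral>\<^sup>+z. ennreal (trunc_powr \<alpha> (a / M) z) \<partial>sym_pareto \<alpha>)"
    by (rule nn_integral_cmult) simp
  also have "\<dots> = ennreal (if M \<le> a then M powr \<alpha> * (2 * (1 - M powr \<alpha> / a powr \<alpha>)) else 0)"
  proof (cases "M \<le> a")
    case True
    have "M powr \<alpha> \<le> a powr \<alpha>"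
      using True assms by (intro powr_mono2) auto
    then have nonneg: "0 \<le> 2 * (1 - M powr \<alpha> / a powr \<alpha>)"
      using assms by (simp add: field_simps)
    have "1 \<le> a / M" "(a / M) powr (-\<alpha>) = M powr \<alpha> / a powr \<alpha>"
      using True assms by (simp_all add: powr_minus_divide powr_divide)
    then have "(\<integral>\<^sup>+z. ennreal (trunc_powr \<alpha> (a / M) z) \<partial>sym_pareto \<alpha>) =
        ennreal (2 * (1 - M powr \<alpha> / a powr \<alpha>))"
      using assms by (simp only: nn_integral_sym_pareto_trunc_powr)
    then show ?thesis
      by (simp only: if_P[OF True] ennreal_mult[OF powr_ge_zero nonneg])
  next
    case False
    then show ?thesis
      using assms by (simp add: nn_integral_sym_pareto_trunc_powr_lt_1)
  qed
  finally show ?thesis .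
qed

definition kendall_ratio :: "real \<Rightarrow> real \<Rightarrow> real \<Rightarrow> real" where
  "kendall_ratio \<alpha> x y = (min \<bar>x\<bar> \<bar>y\<bar> / (max \<bar>x\<bar> \<bar>y\<bar>)) powr \<alpha>"

lemma borel_measurable_kendall_ratio[measurable]: "kendall_ratio \<alpha> x \<in> borel_measurable borel"
  unfolding kendall_ratio_def by measurable

lemma kendall_ratio_nonneg: "0 \<le> kendall_ratio \<alpha> x y"
  by (simp add: kendall_ratio_def)

lemma kendall_ratio_le_1:
  assumes "0 < \<alpha>"
  shows "kendall_ratio \<alpha> x y \<le> 1"
proof -
  have "min \<bar>x\<bar> \<bar>y\<bar> / (max \<bar>x\<bar> \<bar>y\<bar>) \<le> 1"
    by (cases "max \<bar>x\<bar> \<bar>y\<bar> = 0") (auto simp: divide_le_eq_1)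
  then show ?thesis
    unfolding kendall_ratio_def using assms by (intro powr_le1) auto
qed

lemma max_abs_eq_0_iff[simp]: "max \<bar>x\<bar> \<bar>y\<bar> = 0 \<longleftrightarrow> x = 0 \<and> (y::real) = 0"
  by (auto simp: max_def)

lemma kendall_pair_eq:
  "kendall_pair \<alpha> x y A =
    (if max \<bar>x\<bar> \<bar>y\<bar> = 0 then indicator A 0
     else kendall_ratio \<alpha> x y * measure (sym_pareto \<alpha>) ((\<lambda>z. max \<bar>x\<bar> \<bar>y\<bar> * z) -` A)
       + (1 - kendall_ratio \<alpha> x y) * ((indicator A (max \<bar>x\<bar> \<bar>y\<bar>) + indicator A (- max \<bar>x\<bar> \<bar>y\<bar>)) / 2))"
  by (auto simp: kendall_pair_def kendall_ratio_def tdelta_def indicator_def Let_def)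

lemma kendall_pair_uminus_left[simp]: "kendall_pair \<alpha> (-x) y A = kendall_pair \<alpha> x y A"
  by (simp add: kendall_pair_def)

lemma borel_measurable_nn_integral_sym_pareto_scaled[measurable (raw)]:
  assumes "0 < \<alpha>" and [measurable]: "f \<in> borel_measurable borel" "g \<in> borel_measurable M"
  shows "(\<lambda>y. \<integral>\<^sup>+z. f (g y * z) \<partial>sym_pareto \<alpha>) \<in> borel_measurable M"
proof -
  interpret P: prob_space "sym_pareto \<alpha>"
    using assms(1) by (rule prob_space_sym_pareto)
  have "(\<lambda>(c::real, z::real). f (c * z)) \<in> borel_measurable (borel \<Otimes>\<^sub>M sym_pareto \<alpha>)"
    by (simp cong: measurable_cong_sets sets_pair_measure_cong)
  then have "(\<lambda>c. \<integral>\<^sup>+z. f (c * z) \<partial>sym_pareto \<alpha>) \<in> borel_measurable borel"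
    by (rule P.borel_measurable_nn_integral)
  from measurable_compose[OF assms(3) this] show ?thesis
    by simp
qed

lemma borel_measurable_measure_sym_pareto_scaled[measurable (raw)]:
  assumes "0 < \<alpha>" "A \<in> sets borel" "g \<in> borel_measurable M"
  shows "(\<lambda>y. measure (sym_pareto \<alpha>) ((\<lambda>z. g y * z) -` A)) \<in> borel_measurable M"
proof -
  have "measure (sym_pareto \<alpha>) ((\<lambda>z. c * z) -` A) = enn2real (\<integral>\<^sup>+z. indicator A (c * z) \<partial>sym_pareto \<alpha>)" for c
    using sets_borel_vimage_mult[OF assms(2), of c]
    by (simp add: measure_def flip: nn_integral_indicator) (simp add: indicator_def)
  then show ?thesis
    using assms
    by (simp only:) (intro borel_measurable_enn2real borel_measurable_nn_integral_sym_pareto_scaled, auto)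
qed

lemma borel_measurable_kendall_pair:
  assumes "0 < \<alpha>" "A \<in> sets borel"
  shows "(\<lambda>p. kendall_pair \<alpha> (fst p) (snd p) A) \<in> borel_measurable (borel \<Otimes>\<^sub>M borel)"
  unfolding kendall_pair_eq kendall_ratio_def using assms by measurable

lemma kendall_pair_nonneg_le_1:
  assumes "0 < \<alpha>"
  shows "0 \<le> kendall_pair \<alpha> x y A" "kendall_pair \<alpha> x y A \<le> 1"
proof -
  interpret P: prob_space "sym_pareto \<alpha>"
    using assms by (rule prob_space_sym_pareto)
  define r where "r = kendall_ratio \<alpha> x y"
  define m where "m = measure (sym_pareto \<alpha>) ((\<lambda>z. max \<bar>x\<bar> \<bar>y\<bar> * z) -` A)"
  define t where "t = (indicator A (max \<bar>x\<bar> \<bar>y\<bar>) + indicator A (- max \<bar>x\<bar> \<bar>y\<bar>)) / (2::real)"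
  have "0 \<le> r" "r \<le> 1" "0 \<le> m" "m \<le> 1" "0 \<le> t" "t \<le> 1"
    using kendall_ratio_nonneg kendall_ratio_le_1[OF assms]
    by (auto simp: r_def m_def t_def indicator_def)
  then have "0 \<le> r * m + (1 - r) * t" "r * m + (1 - r) * t \<le> 1"
    using mult_left_le[of m r] mult_left_le[of t "1 - r"] by auto
  then show "0 \<le> kendall_pair \<alpha> x y A" "kendall_pair \<alpha> x y A \<le> 1"
    unfolding kendall_pair_eq r_def[symmetric] m_def[symmetric] t_def[symmetric]
    by (auto simp: indicator_def)
qed

lemma kendall_pair_empty[simp]: "kendall_pair \<alpha> x y {} = 0"
  by (simp add: kendall_pair_eq)

lemma kendall_pair_UNIV[simp]:
  assumes "0 < \<alpha>"
  shows "kendall_pair \<alpha> x y UNIV = 1"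
proof -
  interpret P: prob_space "sym_pareto \<alpha>"
    using assms by (rule prob_space_sym_pareto)
  show ?thesis
    by (simp add: kendall_pair_eq P.prob_space[simplified])
qed

lemma kendall_pair_reflect:
  assumes "A \<in> sets borel"
  shows "kendall_pair \<alpha> x y (uminus -` A) = kendall_pair \<alpha> x y A"
proof -
  have "(\<lambda>z. c * z) -` uminus -` A = uminus -` ((\<lambda>z. c * z) -` A)" for c :: real
    by auto
  with sets_borel_vimage_mult[OF assms] show ?thesis
    by (simp add: kendall_pair_eq measure_def emeasure_sym_pareto_reflect indicator_def)
qed

lemma kendall_pair_countably_additive:
  assumes "0 < \<alpha>" "disjoint_family A" "range A \<subseteq> sets borel"
  shows "(\<Sum>i. ennreal (kendall_pair \<alpha> x y (A i))) = ennreal (kendall_pair \<alpha> x y (\<Union>i. A i))"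
proof (cases "max \<bar>x\<bar> \<bar>y\<bar> = 0")
  case True
  then show ?thesis
    by (simp add: kendall_pair_eq ennreal_indicator suminf_indicator[OF assms(2)])
next
  case False
  interpret P: prob_space "sym_pareto \<alpha>"
    using assms(1) by (rule prob_space_sym_pareto)
  define M where "M = max \<bar>x\<bar> \<bar>y\<bar>"
  define r where "r = kendall_ratio \<alpha> x y"
  define B where "B i = (\<lambda>z. M * z) -` A i" for i
  have r: "0 \<le> r" "r \<le> 1"
    using kendall_ratio_nonneg kendall_ratio_le_1[OF assms(1)] by (auto simp: r_def)
  have B_sets: "range B \<subseteq> sets (sym_pareto \<alpha>)"
    using assms(3) sets_borel_vimage_mult by (auto simp: B_def)
  have B_disj: "disjoint_family B"
    using assms(2) unfolding disjoint_family_on_def B_def by auto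
  have "kendall_pair \<alpha> x y C =
      r * measure (sym_pareto \<alpha>) ((\<lambda>z. M * z) -` C) + (1 - r) * tdelta 1 ((\<lambda>z. M * z) -` C)" for C
    using False by (auto simp: kendall_pair_def kendall_ratio_def r_def M_def Let_def)
  then have pair_eq: "ennreal (kendall_pair \<alpha> x y C) =
      ennreal r * emeasure (sym_pareto \<alpha>) ((\<lambda>z. M * z) -` C) + ennreal (1 - r) * ennreal (tdelta 1 ((\<lambda>z. M * z) -` C))"
    for C
    using r by (simp add: ennreal_mult P.emeasure_eq_measure tdelta_nonneg)
  have "(\<Sum>i. ennreal (kendall_pair \<alpha> x y (A i))) =
      ennreal r * (\<Sum>i. emeasure (sym_pareto \<alpha>) (B i)) + ennreal (1 - r) * (\<Sum>i. ennreal (tdelta 1 (B i)))"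
    unfolding pair_eq B_def by (simp add: suminf_add[symmetric])
  also have "\<dots> = ennreal r * emeasure (sym_pareto \<alpha>) (\<Union>i. B i) + ennreal (1 - r) * ennreal (tdelta 1 (\<Union>i. B i))"
    by (simp add: suminf_emeasure[OF B_sets B_disj] tdelta_countably_additive[OF B_disj])
  also have "(\<Union>i. B i) = (\<lambda>z. M * z) -` (\<Union>i. A i)"
    by (auto simp: B_def)
  finally show ?thesis
    unfolding pair_eq .
qed

section \<open>The transition kernel\<close>

locale kendall_walk = prob_space \<nu> for \<nu> :: "real measure" +
  fixes \<alpha> :: real
  assumes alpha_pos: "0 < \<alpha>" and sets_nu: "sets \<nu> = sets borel"
begin

lemma space_nu[simp]: "space \<nu> = UNIV"
  using sets_eq_imp_space_eq[OF sets_nu] by simp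

lemma measurable_nu[simp]: "measurable \<nu> N = measurable borel N"
  by (rule measurable_cong_sets) (auto simp: sets_nu)

lemma borel_measurable_kendall_pair_right:
  assumes "A \<in> sets borel"
  shows "(\<lambda>y. kendall_pair \<alpha> x y A) \<in> borel_measurable borel"
  using measurable_compose_Pair1[OF _ borel_measurable_kendall_pair[OF alpha_pos assms], of x] by simp

lemma integrable_kendall_pair:
  assumes "A \<in> sets borel"
  shows "integrable \<nu> (\<lambda>y. kendall_pair \<alpha> x y A)"
  using kendall_pair_nonneg_le_1[OF alpha_pos] borel_measurable_kendall_pair_right[OF assms]
  by (intro integrable_const_bound[where B=1]) auto

lemma nn_integral_kendall_pair:
  assumes "A \<in> sets borel"
  shows "(\<integral>\<^sup>+y. ennreal (kendall_pair \<alpha> x y A) \<partial>\<nu>) = ennreal (LINT y|\<nu>. kendall_pair \<alpha> x y A)"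
  by (rule nn_integral_eq_integral)
    (auto simp: integrable_kendall_pair[OF assms] kendall_pair_nonneg_le_1[OF alpha_pos])

text \<open>The outer integral over \<open>sym_dirac x\<close> in \<open>kendall_conv\<close> collapses since
  \<open>kendall_pair\<close> is even in its first argument.\<close>
lemma emeasure_kendall_kernel:
  assumes "A \<in> sets borel"
  shows "emeasure (kendall_kernel \<alpha> \<nu> x) A = (\<integral>\<^sup>+y. ennreal (kendall_pair \<alpha> x y A) \<partial>\<nu>)"
proof -
  define \<mu> where "\<mu> A = ennreal (LINT x'|sym_dirac x. LINT y|\<nu>. kendall_pair \<alpha> x' y A)" for A
  have \<mu>_eq: "\<mu> A = (\<integral>\<^sup>+y. ennreal (kendall_pair \<alpha> x y A) \<partial>\<nu>)" if "A \<in> sets borel" for A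
  proof -
    have "(\<lambda>p. kendall_pair \<alpha> (fst p) (snd p) A) \<in> borel_measurable (borel \<Otimes>\<^sub>M \<nu>)"
      using borel_measurable_kendall_pair[OF alpha_pos that]
      by (simp cong: measurable_cong_sets sets_pair_measure_cong add: sets_nu)
    then have "(\<lambda>x'. LINT y|\<nu>. kendall_pair \<alpha> x' y A) \<in> borel_measurable borel"
      by (intro borel_measurable_lebesgue_integral) (simp add: case_prod_beta')
    then show ?thesis
      by (simp add: \<mu>_def integral_sym_dirac_even nn_integral_kendall_pair[OF that])
  qed
  have additive: "countably_additive (sets borel) \<mu>"
  proof (unfold countably_additive_def, intro allI impI)
    fix B :: "nat \<Rightarrow> real set"
    assume B: "range B \<subseteq> sets borel" "disjoint_family B" "\<Union> (range B) \<in> sets borel"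
    have "(\<Sum>i. \<mu> (B i)) = (\<integral>\<^sup>+y. (\<Sum>i. ennreal (kendall_pair \<alpha> x y (B i))) \<partial>\<nu>)"
      using B(1) borel_measurable_kendall_pair_right
      by (auto simp: \<mu>_eq subset_eq intro!: nn_integral_suminf[symmetric])
    also have "\<dots> = \<mu> (\<Union>i. B i)"
      using B by (simp add: \<mu>_eq kendall_pair_countably_additive[OF alpha_pos B(2,1)])
    finally show "(\<Sum>i. \<mu> (B i)) = \<mu> (\<Union> (range B))" .
  qed
  have "emeasure (kendall_kernel \<alpha> \<nu> x) A = \<mu> A"
    unfolding kendall_kernel_def kendall_conv_def \<mu>_def[symmetric]
    by (rule emeasure_measure_of_sigma[OF sigma_algebra_borel_real _ additive assms])
      (auto simp: positive_def \<mu>_eq)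
  then show ?thesis
    using \<mu>_eq[OF assms] by simp
qed

lemma sets_kendall_kernel[simp]: "sets (kendall_kernel \<alpha> \<nu> x) = sets borel"
  by (simp add: kendall_kernel_def kendall_conv_def)

lemma space_kendall_kernel[simp]: "space (kendall_kernel \<alpha> \<nu> x) = UNIV"
  by (simp add: kendall_kernel_def kendall_conv_def)

lemma measurable_kendall_kernel[simp]: "measurable (kendall_kernel \<alpha> \<nu> x) N = measurable borel N"
  by (rule measurable_cong_sets) auto

lemma prob_space_kendall_kernel: "prob_space (kendall_kernel \<alpha> \<nu> x)"
  by (rule prob_spaceI) (simp add: emeasure_kendall_kernel alpha_pos emeasure_space_1[simplified])

lemma measure_kendall_kernel:
  assumes "A \<in> sets borel"
  shows "measure (kendall_kernel \<alpha> \<nu> x) A = (LINT y|\<nu>. kendall_pair \<alpha> x y A)"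
  using assms kendall_pair_nonneg_le_1[OF alpha_pos]
  by (simp add: measure_def emeasure_kendall_kernel nn_integral_kendall_pair integral_nonneg)

lemma measure_kendall_kernel_reflect:
  assumes "A \<in> sets borel"
  shows "measure (kendall_kernel \<alpha> \<nu> x) (uminus -` A) = measure (kendall_kernel \<alpha> \<nu> x) A"
  using assms sets_borel_vimage_uminus[OF assms]
  by (simp add: measure_kendall_kernel kendall_pair_reflect)

end

text \<open>Integral of \<open>f\<close> against the mixture \<open>\<rho>\<^sup>\<alpha> T\<^sub>M \<pi>\<^sub>2\<^sub>\<alpha> + (1 - \<rho>\<^sup>\<alpha>) T\<^sub>M \<delta>\<^sub>1\<close> whose values
  on sets are \<open>kendall_pair \<alpha> x y\<close>.\<close>
definition kendall_pair_nn_integral :: "real \<Rightarrow> real \<Rightarrow> real \<Rightarrow> (real \<Rightarrow> ennreal) \<Rightarrow> ennreal" where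
  "kendall_pair_nn_integral \<alpha> x y f =
    (let M = max \<bar>x\<bar> \<bar>y\<bar>; r = kendall_ratio \<alpha> x y in
     if M = 0 then f 0
     else ennreal r * (\<integral>\<^sup>+z. f (M * z) \<partial>sym_pareto \<alpha>) + ennreal ((1 - r) / 2) * (f M + f (-M)))"

lemma kendall_pair_nn_integral_nonzero:
  assumes "x \<noteq> 0 \<or> y \<noteq> 0"
  shows "kendall_pair_nn_integral \<alpha> x y f =
    ennreal (kendall_ratio \<alpha> x y) * (\<integral>\<^sup>+z. f (max \<bar>x\<bar> \<bar>y\<bar> * z) \<partial>sym_pareto \<alpha>)
    + ennreal ((1 - kendall_ratio \<alpha> x y) / 2) * (f (max \<bar>x\<bar> \<bar>y\<bar>) + f (- max \<bar>x\<bar> \<bar>y\<bar>))"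
  using assms by (auto simp: kendall_pair_nn_integral_def Let_def)

lemma borel_measurable_kendall_pair_nn_integral[measurable]:
  assumes "0 < \<alpha>" "f \<in> borel_measurable borel"
  shows "(\<lambda>y. kendall_pair_nn_integral \<alpha> x y f) \<in> borel_measurable borel"
  using assms unfolding kendall_pair_nn_integral_def Let_def by measurable

lemma kendall_pair_nn_integral_cmult:
  assumes "u \<in> borel_measurable borel"
  shows "kendall_pair_nn_integral \<alpha> x y (\<lambda>v. c * u v) = c * kendall_pair_nn_integral \<alpha> x y u"
  using assms
  by (simp add: kendall_pair_nn_integral_def Let_def nn_integral_cmult distrib_left mult.left_commute)

lemma kendall_pair_nn_integral_add:
  assumes "u \<in> borel_measurable borel" "v \<in> borel_measurable borel"
  shows "kendall_pair_nn_integral \<alpha> x y (\<lambda>w. u w + v w) =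
    kendall_pair_nn_integral \<alpha> x y u + kendall_pair_nn_integral \<alpha> x y v"
  using assms
  by (simp add: kendall_pair_nn_integral_def Let_def nn_integral_add distrib_left ac_simps)

lemma kendall_pair_nn_integral_mono:
  assumes "\<And>v. u v \<le> w v"
  shows "kendall_pair_nn_integral \<alpha> x y u \<le> kendall_pair_nn_integral \<alpha> x y w"
  unfolding kendall_pair_nn_integral_def Let_def using assms
  by (auto intro!: add_mono mult_left_mono nn_integral_mono)

lemma kendall_pair_nn_integral_SUP:
  assumes "incseq U" "\<And>i. U i \<in> borel_measurable borel"
  shows "kendall_pair_nn_integral \<alpha> x y (SUP i. U i) = (SUP i. kendall_pair_nn_integral \<alpha> x y (U i))"
proof (cases "x = 0 \<and> y = 0")
  case True
  then show ?thesis
    by (simp add: kendall_pair_nn_integral_def image_comp)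
next
  case False
  define M where "M = max \<bar>x\<bar> \<bar>y\<bar>"
  define r where "r = kendall_ratio \<alpha> x y"
  have le: "U i v \<le> U j v" if "i \<le> j" for i j v
    using assms(1) that by (auto simp: incseq_def le_fun_def)
  define a where "a i = (\<integral>\<^sup>+z. U i (M * z) \<partial>sym_pareto \<alpha>)" for i
  define b where "b i = U i M + U i (-M)" for i
  have "incseq a" "incseq b"
    by (auto simp: a_def b_def incseq_def intro!: nn_integral_mono add_mono le)
  have "(\<integral>\<^sup>+z. (SUP i. U i) (M * z) \<partial>sym_pareto \<alpha>) = (SUP i. a i)"
    unfolding a_def using assms(2)
    by (simp add: image_comp, intro nn_integral_monotone_convergence_SUP)
      (auto simp: incseq_def le_fun_def le)
  moreover have "(SUP i. U i) M + (SUP i. U i) (-M) = (SUP i. b i)"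
    unfolding b_def by (subst ennreal_SUP_add) (auto simp: incseq_def le image_comp)
  ultimately have "kendall_pair_nn_integral \<alpha> x y (SUP i. U i) =
      (SUP i. ennreal r * a i) + (SUP i. ennreal ((1 - r) / 2) * b i)"
    using False by (simp add: kendall_pair_nn_integral_nonzero M_def r_def SUP_mult_left_ennreal)
  also have "\<dots> = (SUP i. ennreal r * a i + ennreal ((1 - r) / 2) * b i)"
    using \<open>incseq a\<close> \<open>incseq b\<close>
    by (intro ennreal_SUP_add[symmetric]) (auto simp: incseq_def intro!: mult_left_mono)
  also have "\<dots> = (SUP i. kendall_pair_nn_integral \<alpha> x y (U i))"
    using False by (simp add: kendall_pair_nn_integral_nonzero M_def r_def a_def b_def)
  finally show ?thesis .
qed

lemma kendall_pair_nn_integral_indicator: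
  assumes "0 < \<alpha>" "A \<in> sets borel"
  shows "kendall_pair_nn_integral \<alpha> x y (indicator A) = ennreal (kendall_pair \<alpha> x y A)"
proof (cases "x = 0 \<and> y = 0")
  case True
  then show ?thesis
    by (simp add: kendall_pair_nn_integral_def kendall_pair_eq ennreal_indicator)
next
  case False
  interpret P: prob_space "sym_pareto \<alpha>"
    using assms(1) by (rule prob_space_sym_pareto)
  define M where "M = max \<bar>x\<bar> \<bar>y\<bar>"
  define r where "r = kendall_ratio \<alpha> x y"
  have r: "0 \<le> r" "r \<le> 1"
    using kendall_ratio_nonneg kendall_ratio_le_1[OF assms(1)] by (auto simp: r_def)
  have "(\<integral>\<^sup>+z. indicator A (M * z) \<partial>sym_pareto \<alpha>) = (\<integral>\<^sup>+z. indicator ((\<lambda>z. M * z) -` A) z \<partial>sym_pareto \<alpha>)"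
    by (intro nn_integral_cong) (simp add: indicator_def)
  also have "\<dots> = ennreal (measure (sym_pareto \<alpha>) ((\<lambda>z. M * z) -` A))"
    using sets_borel_vimage_mult[OF assms(2)] by (simp add: P.emeasure_eq_measure)
  finally have integral: "(\<integral>\<^sup>+z. indicator A (M * z) \<partial>sym_pareto \<alpha>) =
      ennreal (measure (sym_pareto \<alpha>) ((\<lambda>z. M * z) -` A))" .
  define m where "m = measure (sym_pareto \<alpha>) ((\<lambda>z. M * z) -` A)"
  define t where "t = (indicator A M + indicator A (-M)) / (2::real)"
  have "0 \<le> m" "0 \<le> t"
    by (auto simp: m_def t_def indicator_def)
  have "indicator A M + indicator A (-M) = ennreal (2 * t)"
    by (simp add: t_def indicator_def)
  then have "ennreal ((1 - r) / 2) * (indicator A M + indicator A (-M)) = ennreal ((1 - r) * t)"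
    using r \<open>0 \<le> t\<close> by (simp flip: ennreal_mult)
  then have "kendall_pair_nn_integral \<alpha> x y (indicator A) = ennreal r * ennreal m + ennreal ((1 - r) * t)"
    using False integral by (simp add: kendall_pair_nn_integral_nonzero M_def r_def m_def)
  also have "\<dots> = ennreal (r * m + (1 - r) * t)"
    using r \<open>0 \<le> m\<close> \<open>0 \<le> t\<close> by (simp add: ennreal_mult)
  also have "r * m + (1 - r) * t = kendall_pair \<alpha> x y A"
    using False by (auto simp: kendall_pair_eq M_def r_def m_def t_def)
  finally show ?thesis .
qed

context kendall_walk
begin

lemma nn_integral_kendall_kernel:
  assumes "f \<in> borel_measurable borel"
  shows "(\<integral>\<^sup>+v. f v \<partial>kendall_kernel \<alpha> \<nu> x) = (\<integral>\<^sup>+y. kendall_pair_nn_integral \<alpha> x y f \<partial>\<nu>)"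
  using assms
proof (induction rule: borel_measurable_induct)
  case (cong f g)
  then have "f = g"
    by auto
  with cong show ?case
    by simp
next
  case (set A)
  then show ?case
    by (simp add: emeasure_kendall_kernel kendall_pair_nn_integral_indicator[OF alpha_pos])
next
  case (mult u c)
  then have "(\<integral>\<^sup>+y. kendall_pair_nn_integral \<alpha> x y (\<lambda>v. c * u v) \<partial>\<nu>) =
      c * (\<integral>\<^sup>+y. kendall_pair_nn_integral \<alpha> x y u \<partial>\<nu>)"
    by (simp add: kendall_pair_nn_integral_cmult nn_integral_cmult alpha_pos)
  with mult show ?case
    by (simp add: nn_integral_cmult)
next
  case (add u v)
  then show ?case
    by (simp add: nn_integral_add kendall_pair_nn_integral_add alpha_pos)
next
  case (seq U)
  have "incseq (\<lambda>i y. kendall_pair_nn_integral \<alpha> x y (U i))"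
    using \<open>incseq U\<close> by (auto simp: incseq_def le_fun_def intro!: kendall_pair_nn_integral_mono)
  have "(\<integral>\<^sup>+v. (SUP i. U i) v \<partial>kendall_kernel \<alpha> \<nu> x) = (\<integral>\<^sup>+v. (SUP i. U i v) \<partial>kendall_kernel \<alpha> \<nu> x)"
    by (simp add: image_comp)
  also have "\<dots> = (SUP i. \<integral>\<^sup>+y. kendall_pair_nn_integral \<alpha> x y (U i) \<partial>\<nu>)"
    using seq by (simp add: nn_integral_monotone_convergence_SUP)
  also have "\<dots> = (\<integral>\<^sup>+y. (SUP i. kendall_pair_nn_integral \<alpha> x y (U i)) \<partial>\<nu>)"
    using seq \<open>incseq (\<lambda>i y. kendall_pair_nn_integral \<alpha> x y (U i))\<close>
    by (intro nn_integral_monotone_convergence_SUP[symmetric]) (auto simp: alpha_pos)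
  also have "\<dots> = (\<integral>\<^sup>+y. kendall_pair_nn_integral \<alpha> x y (SUP i. U i) \<partial>\<nu>)"
    using seq by (simp add: kendall_pair_nn_integral_SUP)
  finally show ?case .
qed

end

section \<open>Tail and truncated moment of one step\<close>

lemma kendall_ratio_mult_max_powr:
  fixes x y :: real
  assumes "x \<noteq> 0 \<or> y \<noteq> 0"
  shows "kendall_ratio \<alpha> x y * (max \<bar>x\<bar> \<bar>y\<bar>) powr \<alpha> = (min \<bar>x\<bar> \<bar>y\<bar>) powr \<alpha>"
  using assms by (auto simp: kendall_ratio_def powr_divide)

lemma min_powr_mult_max_powr:
  fixes x y :: real
  shows "(min \<bar>x\<bar> \<bar>y\<bar>) powr \<alpha> * (max \<bar>x\<bar> \<bar>y\<bar>) powr \<alpha> = \<bar>x\<bar> powr \<alpha> * \<bar>y\<bar> powr \<alpha>"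
  by (cases "\<bar>x\<bar> \<le> \<bar>y\<bar>") (auto simp: min_def max_def mult.commute)

lemma min_powr_add_max_powr:
  fixes x y :: real
  shows "(min \<bar>x\<bar> \<bar>y\<bar>) powr \<alpha> + (max \<bar>x\<bar> \<bar>y\<bar>) powr \<alpha> = \<bar>x\<bar> powr \<alpha> + \<bar>y\<bar> powr \<alpha>"
  by (cases "\<bar>x\<bar> \<le> \<bar>y\<bar>") (auto simp: min_def max_def)

lemma kendall_pair_greaterThan:
  fixes x y :: real
  assumes "0 < \<alpha>" "0 < a"
  shows "kendall_pair \<alpha> x y {a<..} =
    (if \<bar>x\<bar> \<le> a \<and> \<bar>y\<bar> \<le> a then \<bar>x\<bar> powr \<alpha> * \<bar>y\<bar> powr \<alpha> / (2 * (a powr \<alpha>)^2) else 1/2)"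
proof (cases "x = 0 \<and> y = 0")
  case True
  then show ?thesis
    using assms by (simp add: kendall_pair_eq)
next
  case False
  define M where "M = max \<bar>x\<bar> \<bar>y\<bar>"
  define r where "r = kendall_ratio \<alpha> x y"
  have "0 < M"
    using False by (auto simp: M_def max_def)
  have "(\<lambda>z. M * z) -` {a<..} = {a / M<..}"
    using \<open>0 < M\<close> by (auto simp: field_simps)
  then have "kendall_pair \<alpha> x y {a<..} =
      r * measure (sym_pareto \<alpha>) {a / M<..} + (1 - r) * ((indicator {a<..} M + indicator {a<..} (-M)) / 2)"
    using \<open>0 < M\<close> unfolding kendall_pair_eq M_def[symmetric] r_def[symmetric] by simp
  also have "\<dots> = r * (if M \<le> a then (a / M) powr (-2*\<alpha>) / 2 else 1/2) + (1 - r) * (of_bool (a < M) / 2)"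
    using \<open>0 < M\<close> assms by (simp add: measure_sym_pareto_greaterThan indicator_def)
  finally have pair: "kendall_pair \<alpha> x y {a<..} = \<dots>" .
  show ?thesis
  proof (cases "M \<le> a")
    case True
    have "kendall_pair \<alpha> x y {a<..} = r * ((M powr \<alpha> / a powr \<alpha>)^2 / 2)"
      using pair True \<open>0 < M\<close> assms by (simp add: powr_minus_divide powr_divide power_divide powr_power)
    also have "\<dots> = r * (M powr \<alpha>)^2 / (2 * (a powr \<alpha>)^2)"
      by (simp add: power_divide)
    also have "r * (M powr \<alpha>)^2 = \<bar>x\<bar> powr \<alpha> * \<bar>y\<bar> powr \<alpha>"
      using kendall_ratio_mult_max_powr[of x y \<alpha>] False min_powr_mult_max_powr[of x y \<alpha>]
      by (simp add: power2_eq_square r_def M_def mult.assoc[symmetric])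
    moreover have "\<bar>x\<bar> \<le> a \<and> \<bar>y\<bar> \<le> a"
      using True by (simp add: M_def)
    ultimately show ?thesis
      by simp
  next
    case False
    with pair have "kendall_pair \<alpha> x y {a<..} = 1/2"
      by (simp add: field_simps)
    moreover have "\<not> (\<bar>x\<bar> \<le> a \<and> \<bar>y\<bar> \<le> a)"
      using False by (auto simp: M_def)
    ultimately show ?thesis
      by auto
  qed
qed

lemma kendall_pair_nn_integral_trunc_powr:
  fixes x y :: real
  assumes "0 < \<alpha>" "0 < a"
  shows "kendall_pair_nn_integral \<alpha> x y (\<lambda>v. ennreal (trunc_powr \<alpha> a v)) =
    ennreal (if \<bar>x\<bar> \<le> a \<and> \<bar>y\<bar> \<le> a
             then \<bar>x\<bar> powr \<alpha> + \<bar>y\<bar> powr \<alpha> - 2 * (\<bar>x\<bar> powr \<alpha> * \<bar>y\<bar> powr \<alpha>) / a powr \<alpha> else 0)"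
proof (cases "x = 0 \<and> y = 0")
  case True
  then show ?thesis
    using assms by (simp add: kendall_pair_nn_integral_def trunc_powr_def)
next
  case False
  define M where "M = max \<bar>x\<bar> \<bar>y\<bar>"
  define r where "r = kendall_ratio \<alpha> x y"
  have "0 < M"
    using False by (auto simp: M_def max_def)
  have pair: "kendall_pair_nn_integral \<alpha> x y (\<lambda>v. ennreal (trunc_powr \<alpha> a v)) =
      ennreal r * (\<integral>\<^sup>+z. ennreal (trunc_powr \<alpha> a (M * z)) \<partial>sym_pareto \<alpha>)
      + ennreal ((1 - r) / 2) * (ennreal (trunc_powr \<alpha> a M) + ennreal (trunc_powr \<alpha> a (-M)))"
    using False by (simp add: kendall_pair_nn_integral_nonzero M_def r_def)
  show ?thesis
  proof (cases "M \<le> a")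
    case True
    have "M powr \<alpha> \<le> a powr \<alpha>"
      using True \<open>0 < M\<close> assms by (intro powr_mono2) auto
    then have frac: "0 \<le> 1 - M powr \<alpha> / a powr \<alpha>"
      using assms by simp
    have "ennreal (trunc_powr \<alpha> a M) + ennreal (trunc_powr \<alpha> a (-M)) = ennreal (2 * M powr \<alpha>)"
      using True \<open>0 < M\<close> by (subst ennreal_plus[symmetric]) (auto simp: trunc_powr_def)
    then have "kendall_pair_nn_integral \<alpha> x y (\<lambda>v. ennreal (trunc_powr \<alpha> a v)) =
        ennreal r * ennreal (M powr \<alpha> * (2 * (1 - M powr \<alpha> / a powr \<alpha>)))
        + ennreal ((1 - r) / 2) * ennreal (2 * M powr \<alpha>)"
      using pair True \<open>0 < M\<close> assms by (simp add: nn_integral_sym_pareto_trunc_powr_scaled)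
    also have "\<dots> = ennreal (r * (M powr \<alpha> * (2 * (1 - M powr \<alpha> / a powr \<alpha>))) + (1 - r) / 2 * (2 * M powr \<alpha>))"
      using kendall_ratio_nonneg kendall_ratio_le_1[OF assms(1)] frac
      by (intro ennreal_mult_add_mult) (auto simp: r_def)
    also have "r * (M powr \<alpha> * (2 * (1 - M powr \<alpha> / a powr \<alpha>))) + (1 - r) / 2 * (2 * M powr \<alpha>) =
        r * M powr \<alpha> + M powr \<alpha> - 2 * (r * M powr \<alpha> * M powr \<alpha>) / a powr \<alpha>"
      by (simp add: algebra_simps diff_divide_distrib)
    also have "\<dots> =
        \<bar>x\<bar> powr \<alpha> + \<bar>y\<bar> powr \<alpha> - 2 * (\<bar>x\<bar> powr \<alpha> * \<bar>y\<bar> powr \<alpha>) / a powr \<alpha>"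
      using kendall_ratio_mult_max_powr[of x y \<alpha>] False min_powr_mult_max_powr[of x y \<alpha>]
        min_powr_add_max_powr[of x y \<alpha>]
      by (simp add: r_def M_def)
    moreover have "\<bar>x\<bar> \<le> a \<and> \<bar>y\<bar> \<le> a"
      using True by (simp add: M_def)
    ultimately show ?thesis
      by simp
  next
    case False
    then have "trunc_powr \<alpha> a M = 0" "trunc_powr \<alpha> a (-M) = 0" "\<not> (\<bar>x\<bar> \<le> a \<and> \<bar>y\<bar> \<le> a)"
      by (auto simp: trunc_powr_def M_def)
    then show ?thesis
      using pair False \<open>0 < M\<close> assms by (auto simp: nn_integral_sym_pareto_trunc_powr_scaled)
  qed
qed

lemma integrable_trunc_powr:
  assumes "prob_space M" "sets M = sets borel" "0 \<le> \<alpha>"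
  shows "integrable M (trunc_powr \<alpha> a)"
proof -
  interpret prob_space M by fact
  have "trunc_powr \<alpha> a \<in> borel_measurable M"
    using assms(2) by (simp cong: measurable_cong_sets)
  moreover have "\<bar>trunc_powr \<alpha> a v\<bar> \<le> \<bar>a\<bar> powr \<alpha>" for v
    using assms(3) by (auto simp: trunc_powr_def indicator_def intro!: powr_mono2)
  ultimately show ?thesis
    by (intro integrable_const_bound[where B="\<bar>a\<bar> powr \<alpha>"]) auto
qed

lemma integrable_indicator_borel:
  assumes "prob_space M" "sets M = sets borel" "A \<in> sets borel"
  shows "integrable M (indicator A :: real \<Rightarrow> real)"
proof -
  interpret prob_space M by fact
  show ?thesis
    using assms by (intro integrable_real_indicator) (auto simp: emeasure_eq_measure)
qed

lemma integral_trunc_powr_combination: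
  assumes "prob_space M" "sets M = sets borel" "0 \<le> \<alpha>" "A \<in> sets borel" "B \<in> sets borel"
  shows "(LINT y|M. c + d * indicator A y + e * indicator B y + f * trunc_powr \<alpha> a y) =
    c + d * measure M A + e * measure M B + f * (LINT y|M. trunc_powr \<alpha> a y)"
proof -
  interpret prob_space M by fact
  have "space M = UNIV"
    using sets_eq_imp_space_eq[OF assms(2)] by simp
  then show ?thesis
    using assms(4,5) prob_space
    by (simp add: integrable_indicator_borel[OF assms(1,2)] integrable_trunc_powr[OF assms(1-3)] prob_space)
qed

locale kendall_walk_level = kendall_walk +
  fixes a :: real
  assumes a_pos: "0 < a"
begin

abbreviation G :: real where "G \<equiv> kG \<alpha> \<nu> a"

abbreviation H :: real where "H \<equiv> kH \<alpha> \<nu> a"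

definition scaled_powr :: "real \<Rightarrow> real" where
  "scaled_powr x = \<bar>x\<bar> powr \<alpha> / a powr \<alpha>"

lemma a_powr_pos: "0 < a powr \<alpha>"
  using a_pos by simp

lemma abs_powr_le_a_powr: "\<bar>x\<bar> \<le> a \<Longrightarrow> \<bar>x\<bar> powr \<alpha> \<le> a powr \<alpha>"
  using alpha_pos by (intro powr_mono2) auto

lemma integral_trunc_powr_nu: "(LINT y|\<nu>. trunc_powr \<alpha> a y) = a powr \<alpha> * H"
  using a_pos by (simp add: kH_def trunc_powr_def powr_minus_divide)

lemma integral_trunc_powr_combination_nu:
  "(LINT y|\<nu>. c + d * indicator {-a..a} y + e * trunc_powr \<alpha> a y) =
    c + d * measure \<nu> {-a..a} + e * (a powr \<alpha> * H)"
  using integral_trunc_powr_combination[OF prob_space_axioms sets_nu less_imp_le[OF alpha_pos],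
      where A="{-a..a}" and B="{}" and c=c and d=d and e=0 and f=e and a=a]
  by (simp add: integral_trunc_powr_nu)

lemma Psi_scaled_eq: "Psi \<alpha> (y / a) = indicator {-a..a} y - trunc_powr \<alpha> a y / a powr \<alpha>"
proof (cases "\<bar>y\<bar> \<le> a")
  case True
  then have "\<bar>y\<bar> powr \<alpha> \<le> a powr \<alpha>"
    by (rule abs_powr_le_a_powr)
  then show ?thesis
    using True a_pos by (auto simp: Psi_def abs_divide powr_divide trunc_powr_def indicator_def)
next
  case False
  then have "a powr \<alpha> < \<bar>y\<bar> powr \<alpha>"
    using alpha_pos a_pos by (intro powr_less_mono2) auto
  then show ?thesis
    using False a_pos by (auto simp: Psi_def abs_divide powr_divide trunc_powr_def indicator_def)
qed

lemma kG_eq: "G = measure \<nu> {-a..a} - H"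
  using integral_trunc_powr_combination_nu[of 0 1 "- 1 / a powr \<alpha>"] a_powr_pos
  by (simp add: kG_def Psi_scaled_eq diff_divide_distrib)

lemma measure_kendall_kernel_greaterThan:
  "measure (kendall_kernel \<alpha> \<nu> x) {a<..} =
    (if \<bar>x\<bar> \<le> a then (1 - G - H + scaled_powr x * H) / 2 else 1 / 2)"
proof (cases "\<bar>x\<bar> \<le> a")
  case True
  have pair: "kendall_pair \<alpha> x y {a<..} =
      1/2 + (-1/2) * indicator {-a..a} y + \<bar>x\<bar> powr \<alpha> / (2 * (a powr \<alpha>)^2) * trunc_powr \<alpha> a y" for y
    using True alpha_pos a_pos by (auto simp: kendall_pair_greaterThan trunc_powr_def indicator_def)
  have "measure (kendall_kernel \<alpha> \<nu> x) {a<..} =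
      1/2 + (-1/2) * measure \<nu> {-a..a} + \<bar>x\<bar> powr \<alpha> / (2 * (a powr \<alpha>)^2) * (a powr \<alpha> * H)"
    unfolding measure_kendall_kernel[of "{a<..}", simplified] pair integral_trunc_powr_combination_nu ..
  also have "\<dots> = (1 - G - H + scaled_powr x * H) / 2"
    using a_powr_pos by (simp add: kG_eq scaled_powr_def field_simps power2_eq_square)
  finally show ?thesis
    using True by simp
next
  case False
  then have pair: "kendall_pair \<alpha> x y {a<..} = 1/2" for y
    using alpha_pos a_pos by (simp add: kendall_pair_greaterThan)
  show ?thesis
    using False prob_space unfolding measure_kendall_kernel[of "{a<..}", simplified] pair by simp
qed

lemma measure_kendall_kernel_lessThan:
  "measure (kendall_kernel \<alpha> \<nu> x) {..<-a} = measure (kendall_kernel \<alpha> \<nu> x) {a<..}"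
proof -
  have "{..<-a} = uminus -` {a<..}"
    by auto
  then show ?thesis
    by (simp add: measure_kendall_kernel_reflect)
qed

lemma measure_kendall_kernel_Icc:
  "measure (kendall_kernel \<alpha> \<nu> x) {-a..a} = 1 - 2 * measure (kendall_kernel \<alpha> \<nu> x) {a<..}"
proof -
  interpret K: prob_space "kendall_kernel \<alpha> \<nu> x"
    by (rule prob_space_kendall_kernel)
  have "{-a..a} = space (kendall_kernel \<alpha> \<nu> x) - ({..<-a} \<union> {a<..})"
    by auto
  then have "K.prob {-a..a} = K.prob (space (kendall_kernel \<alpha> \<nu> x)) - K.prob ({..<-a} \<union> {a<..})"
    by (simp only:) (rule K.finite_measure_compl, simp)
  also have "K.prob ({..<-a} \<union> {a<..}) = K.prob {..<-a} + K.prob {a<..}"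
    using a_pos by (intro K.finite_measure_Union) auto
  finally show ?thesis
    using K.prob_space by (simp add: measure_kendall_kernel_lessThan)
qed

lemma integral_kendall_kernel_trunc_powr:
  "(LINT v|kendall_kernel \<alpha> \<nu> x. trunc_powr \<alpha> a v) =
    (if \<bar>x\<bar> \<le> a then a powr \<alpha> * (H + scaled_powr x * (G - H)) else 0)"
proof -
  define J where "J y = (if \<bar>x\<bar> \<le> a \<and> \<bar>y\<bar> \<le> a
    then \<bar>x\<bar> powr \<alpha> + \<bar>y\<bar> powr \<alpha> - 2 * (\<bar>x\<bar> powr \<alpha> * \<bar>y\<bar> powr \<alpha>) / a powr \<alpha> else 0)" for y
  have J_bounds: "0 \<le> J y \<and> J y \<le> 2 * a powr \<alpha>" for y
    using sum_minus_twice_product_bounds[of "\<bar>x\<bar> powr \<alpha>" "a powr \<alpha>" "\<bar>y\<bar> powr \<alpha>"]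
      abs_powr_le_a_powr[of x] abs_powr_le_a_powr[of y] a_powr_pos
    by (auto simp: J_def)
  have "J \<in> borel_measurable borel"
    unfolding J_def by measurable
  with J_bounds have "integrable \<nu> J"
    by (intro integrable_const_bound[where B="2 * a powr \<alpha>"]) auto
  have "(LINT v|kendall_kernel \<alpha> \<nu> x. trunc_powr \<alpha> a v) =
      enn2real (\<integral>\<^sup>+v. ennreal (trunc_powr \<alpha> a v) \<partial>kendall_kernel \<alpha> \<nu> x)"
    by (rule integral_eq_nn_integral) (auto simp: trunc_powr_nonneg)
  also have "\<dots> = enn2real (\<integral>\<^sup>+y. ennreal (J y) \<partial>\<nu>)"
    using nn_integral_kendall_kernel[of "\<lambda>v. ennreal (trunc_powr \<alpha> a v)" x]
      kendall_pair_nn_integral_trunc_powr[OF alpha_pos a_pos, of x]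
    by (simp add: J_def)
  also have "\<dots> = (LINT y|\<nu>. J y)"
    using \<open>integrable \<nu> J\<close> J_bounds by (simp add: nn_integral_eq_integral integral_nonneg)
  also have "\<dots> = (if \<bar>x\<bar> \<le> a then a powr \<alpha> * (H + scaled_powr x * (G - H)) else 0)"
  proof (cases "\<bar>x\<bar> \<le> a")
    case True
    then have "J y = 0 + \<bar>x\<bar> powr \<alpha> * indicator {-a..a} y + (1 - 2 * \<bar>x\<bar> powr \<alpha> / a powr \<alpha>) * trunc_powr \<alpha> a y" for y
      using True by (auto simp: J_def trunc_powr_def indicator_def algebra_simps)
    then have "(LINT y|\<nu>. J y) = \<bar>x\<bar> powr \<alpha> * measure \<nu> {-a..a} + (1 - 2 * \<bar>x\<bar> powr \<alpha> / a powr \<alpha>) * (a powr \<alpha> * H)"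
      by (simp only: integral_trunc_powr_combination_nu)
    also have "\<dots> = a powr \<alpha> * (H + scaled_powr x * (G - H))"
      using a_powr_pos by (simp add: kG_eq scaled_powr_def field_simps)
    finally show ?thesis
      using True by simp
  qed (simp add: J_def)
  finally show ?thesis .
qed

end

section \<open>The first-passage recursion\<close>

text \<open>For \<open>|x| \<le> a\<close> the first-passage probability \<open>P\<^sub>x(\<tau>\<^sub>a\<^sup>+ = k + 1)\<close> equals
  \<open>p\<^sub>k + q\<^sub>k (|x|/a)\<^sup>\<alpha>\<close> with \<open>(p\<^sub>k, q\<^sub>k) = passage_coeffs G H k\<close>; the inhomogeneous term
  \<open>2\<^sup>-\<^sup>k\<^sup>-\<^sup>2\<close> comes from walkers below \<open>-a\<close>.\<close>
fun passage_coeffs :: "real \<Rightarrow> real \<Rightarrow> nat \<Rightarrow> real \<times> real" where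
  "passage_coeffs G H 0 = ((1 - G - H) / 2, H / 2)"
| "passage_coeffs G H (Suc k) =
    ((G + H) * fst (passage_coeffs G H k) + H * snd (passage_coeffs G H k) + (1/2)^(k+2) * (1 - G - H),
     - H * fst (passage_coeffs G H k) + (G - H) * snd (passage_coeffs G H k) + (1/2)^(k+2) * H)"

text \<open>The recursion matrix \<open>[[G + H, H], [-H, G - H]]\<close> has \<open>G\<close> as a double eigenvalue,
  whence the secular terms \<open>m G\<^sup>m\<close>.\<close>
lemma passage_coeffs_closed_form:
  assumes "2 * G - 1 \<noteq> 0"
  shows "passage_coeffs G H m =
    (let e = 2 * G - 1; b = H * (1 - G) / e in
     ((1 + H / e^2 - G / e) * (1/2)^Suc m + (b * real (Suc m) + (G * (1 - G) / e - H * G / e^2)) * G^m,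
      - H / e^2 * (1/2)^Suc m + (H * G / e^2 - b * real (Suc m)) * G^m))"
proof -
  define e where "e = 2 * G - 1"
  have "e \<noteq> 0" and G_eq: "G = (e + 1) / 2"
    using assms by (simp_all add: e_def)
  show ?thesis
    unfolding e_def[symmetric] Let_def
    unfolding G_eq using \<open>e \<noteq> 0\<close>
    by (induction m) (simp_all add: field_simps power2_eq_square)
qed

lemma fst_passage_coeffs_eq:
  fixes G H :: real
  assumes "2 * G - 1 \<noteq> 0" "G \<noteq> 1"
  shows "fst (passage_coeffs G H m) =
    (let A = 1 + H / (2*G - 1)^2 - G / (2*G - 1);
         B = H / ((2*G - 1) * (1 - G));
         C = G / (2*G - 1) - H / (2*G - 1)^2 * (G / (1 - G))
     in A * (1/2)^(Suc m) + B * real (Suc m) * (1 - G)^2 * G^(Suc m - 1) + C * G^(Suc m - 1) * (1 - G))"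
proof -
  define e where "e = 2 * G - 1"
  define B where "B = H / (e * (1 - G))"
  define C where "C = G / e - H / e^2 * (G / (1 - G))"
  have "e \<noteq> 0" "1 - G \<noteq> 0"
    using assms by (simp_all add: e_def)
  then have "H * (1 - G) / e = B * (1 - G)^2"
    and "G * (1 - G) / e - H * G / e^2 = C * (1 - G)"
    by (simp_all add: B_def C_def field_simps power2_eq_square)
  then have "fst (passage_coeffs G H m) =
      (1 + H / e^2 - G / e) * (1/2)^Suc m + (B * (1 - G)^2 * real (Suc m) + C * (1 - G)) * G^m"
    by (simp only: passage_coeffs_closed_form[OF assms(1)] Let_def e_def[symmetric] fst_conv)
  then show ?thesis
    unfolding Let_def e_def[symmetric] B_def[symmetric] C_def[symmetric]
    by (simp add: algebra_simps)
qed

lemma passage_constants_sum: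
  fixes G H :: real
  assumes "2 * G - 1 \<noteq> 0" "G \<noteq> 1"
  shows "(1 + H / (2*G - 1)^2 - G / (2*G - 1)) + H / ((2*G - 1) * (1 - G))
     + (G / (2*G - 1) - H / (2*G - 1)^2 * (G / (1 - G))) = 1"
proof -
  define e where "e = 2 * G - 1"
  have "e \<noteq> 0" "1 - G \<noteq> 0"
    using assms by (simp_all add: e_def)
  then have "H / e^2 + H / (e * (1 - G)) - H / e^2 * (G / (1 - G)) = H * (1 - G + e - G) / (e^2 * (1 - G))"
    by (simp add: divide_simps) (simp add: algebra_simps power2_eq_square)
  also have "1 - G + e - G = 0"
    by (simp add: e_def)
  finally show ?thesis
    unfolding e_def[symmetric] by (simp add: algebra_simps)
qed

context kendall_walk_level
begin

lemma kendall_passage_eq: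
  "kendall_passage \<alpha> \<nu> a k x =
    (if a < \<bar>x\<bar> then (1/2)^(k+1)
     else fst (passage_coeffs G H k) + snd (passage_coeffs G H k) * scaled_powr x)"
proof (induction k arbitrary: x)
  case 0
  then show ?case
    by (simp add: measure_kendall_kernel_greaterThan field_simps)
next
  case (Suc k)
  define t p q where "t = (1/2::real)^(k+1)" and "p = fst (passage_coeffs G H k)"
    and "q = snd (passage_coeffs G H k)"
  have "indicator {..a} y * kendall_passage \<alpha> \<nu> a k y =
      0 + t * indicator {..<-a} y + p * indicator {-a..a} y + q / a powr \<alpha> * trunc_powr \<alpha> a y" for y
    using a_pos by (auto simp: Suc t_def p_def q_def scaled_powr_def trunc_powr_def indicator_def)
  then have "kendall_passage \<alpha> \<nu> a (Suc k) x =
      t * measure (kendall_kernel \<alpha> \<nu> x) {..<-a} + p * measure (kendall_kernel \<alpha> \<nu> x) {-a..a}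
      + q / a powr \<alpha> * (LINT y|kendall_kernel \<alpha> \<nu> x. trunc_powr \<alpha> a y)"
    using integral_trunc_powr_combination[OF prob_space_kendall_kernel sets_kendall_kernel
        less_imp_le[OF alpha_pos], where A="{..<-a}" and B="{-a..a}" and c=0 and d=t and e=p and f="q / a powr \<alpha>"]
    by simp
  also have "\<dots> = (if a < \<bar>x\<bar> then (1/2)^(Suc k + 1)
      else fst (passage_coeffs G H (Suc k)) + snd (passage_coeffs G H (Suc k)) * scaled_powr x)"
    using a_powr_pos
    by (simp add: measure_kendall_kernel_lessThan measure_kendall_kernel_Icc measure_kendall_kernel_greaterThan
        integral_kendall_kernel_trunc_powr t_def p_def q_def field_simps)
  finally show ?case .
qed

lemma kG_neq_1:
  assumes "measure \<nu> {0} = 0"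
  shows "G \<noteq> 1"
proof
  assume "G = 1"
  have Psi_bounds: "0 \<le> Psi \<alpha> t" "Psi \<alpha> t \<le> 1" for t
    by (auto simp: Psi_def)
  have "(\<lambda>y. Psi \<alpha> (y / a)) \<in> borel_measurable borel"
    unfolding Psi_def by measurable
  then have "integrable \<nu> (\<lambda>y. Psi \<alpha> (y / a))"
    using Psi_bounds by (intro integrable_const_bound[where B=1]) auto
  then have "(LINT y|\<nu>. 1 - Psi \<alpha> (y / a)) = 0"
    using \<open>G = 1\<close> prob_space by (simp add: kG_def)
  then have "AE y in \<nu>. 1 - Psi \<alpha> (y / a) = 0"
    using \<open>integrable \<nu> (\<lambda>y. Psi \<alpha> (y / a))\<close> Psi_bounds
    by (subst integral_nonneg_eq_0_iff_AE[symmetric]) auto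
  then have "AE y in \<nu>. y = 0"
    by eventually_elim (use a_pos in \<open>auto simp: Psi_def max_def split: if_splits\<close>)
  then have "prob {0} = 1"
    using prob_Collect_eq_1[of "\<lambda>y. y = 0"] by (simp add: sets_nu)
  with assms show False
    by simp
qed

end

theorem mainTheorem12:
  fixes \<alpha> a :: real and \<nu> :: "real measure"
  assumes "\<alpha> > 0"
    and "sym_measure \<nu>"
    and "measure \<nu> {0} = 0"
    and "a > 0"
    and "measure \<nu> {a} = 0"
    and "kG \<alpha> \<nu> a \<noteq> 1/2"
  shows "(\<forall>n::nat. n \<ge> 1 \<longrightarrow>
           first_passage_prob \<alpha> \<nu> a n =
             (let G = kG \<alpha> \<nu> a; H = kH \<alpha> \<nu> a;
                  A = 1 + H / (2*G - 1)^2 - G / (2*G - 1);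
                  B = H / ((2*G - 1) * (1 - G));
                  C = G / (2*G - 1) - H / (2*G - 1)^2 * (G / (1 - G))
              in A * (1/2)^n + B * real n * (1 - G)^2 * G^(n-1) + C * G^(n-1) * (1 - G)))
       \<and> (let G = kG \<alpha> \<nu> a; H = kH \<alpha> \<nu> a;
              A = 1 + H / (2*G - 1)^2 - G / (2*G - 1);
              B = H / ((2*G - 1) * (1 - G));
              C = G / (2*G - 1) - H / (2*G - 1)^2 * (G / (1 - G))
          in A + B + C = 1)"
proof -
  have "prob_space \<nu>" "sets \<nu> = sets borel"
    using assms(2) by (simp_all add: sym_measure_def)
  with assms(1,4) interpret kendall_walk_level \<nu> \<alpha> a
    by (simp add: kendall_walk_level_def kendall_walk_def kendall_walk_axioms_def kendall_walk_level_axioms_def)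
  have "2 * G - 1 \<noteq> 0"
    using assms(6) by simp
  moreover have "G \<noteq> 1"
    using assms(3) by (rule kG_neq_1)
  moreover have "first_passage_prob \<alpha> \<nu> a (Suc m) = fst (passage_coeffs G H m)" for m
    using kendall_passage_eq[of m 0] a_pos by (simp add: first_passage_prob_def scaled_powr_def)
  ultimately show ?thesis
    unfolding Let_def
    by (metis Suc_le_D fst_passage_coeffs_eq[unfolded Let_def] passage_constants_sum One_nat_def)
qed

end
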